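(* Let $K \subset \mathbb R^3$ be a regular convex cone whose boundary is of class $C^k$, $k \geq 5$, and positively curved, and let $\gamma \subset \mathbb{RP}^2$ be the projective image of $\partial K$. Let $\alpha,\beta$ be $2\pi$-periodic real functions of class $C^{k-4}$, $C^{k-5}$ respectively, and let $y:\mathbb R \to \mathbb R^3$ be a $2\pi$-periodic solution of \[ y''' + 2\alpha y' + \alpha' y + \beta y = 0 \] such that $\det(y'',y',y) \equiv 1$, the projective image of $y$ is $\gamma$, and $y(t)$ makes exactly one turn around $K$ along $\partial K$ as $t$ runs over one period. If the eigenvalues of the monodromy of the equation $x'' + \frac12\alpha x = 0$ are not equal to $1$, then $\gamma$ does not possess a global periodic Forsyth–Laguerre parametrization.
   Context: A regular convex cone is a closed convex cone with non-empty interior containing no lines. "Positively curved boundary" means $\partial K\setminus\{0\}$ has everywhere positive curvature (transverse to the rays), so that $\gamma$ is a simple closed strictly convex curve without inflection points. The monodromy of $x''+\frac12\alpha x = 0$ is the matrix $T\in SL(2,\mathbb R)$ with $x(t+2\pi)=Tx(t)$ for a vector-valued solution $x:\mathbb R\to\mathbb R^2$ with linearly independent components (its conjugacy class does not depend on the choice of $x$). A global periodic Forsyth–Laguerre parametrization of $\gamma$ is a periodic parametrization of the whole closed curve $\gamma$ by a real variable $s$ (one period corresponding to one traversal of $\gamma$) for which $\gamma$ has a periodic lift $\tilde y(s)$ to $\mathbb R^3$ with $\det(\tilde y'',\tilde y',\tilde y)\equiv 1$ solving $\tilde y''' + 2\tilde\alpha\tilde y' + \tilde\alpha'\tilde y +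 \tilde\beta\tilde y = 0$ with $\tilde\alpha \equiv 0$ (derivatives with respect to $s$). *)

theory Defs
  imports "HOL-Analysis.Analysis"
begin

definition Ck :: "nat \<Rightarrow> (real \<Rightarrow> real) \<Rightarrow> bool" where
  "Ck k f \<longleftrightarrow> (\<forall>j<k. \<forall>x. (deriv ^^ j) f differentiable (at x))
                 \<and> continuous_on UNIV ((deriv ^^ k) f)"

definition vderiv :: "(real \<Rightarrow> real ^ 'n) \<Rightarrow> real \<Rightarrow> real ^ 'n" where
  "vderiv y t = (\<chi> i. deriv (\<lambda>s. y s $ i) t)"

definition Ck_vec :: "nat \<Rightarrow> (real \<Rightarrow> real ^ 'n) \<Rightarrow> bool" where
  "Ck_vec k y \<longleftrightarrow> (\<forall>i. Ck k (\<lambda>t. y t $ i))"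

definition det3 :: "real^3 \<Rightarrow> real^3 \<Rightarrow> real^3 \<Rightarrow> real" where
  "det3 a b c = det (vector [a, b, c] :: real^3^3)"

definition regular_convex_cone :: "(real^3) set \<Rightarrow> bool" where
  "regular_convex_cone K \<longleftrightarrow> closed K \<and> convex K \<and> cone K \<and> interior K \<noteq> {}
     \<and> (\<forall>x. x \<in> K \<and> -x \<in> K \<longrightarrow> x = 0)"

text \<open>The boundary minus the apex is a C^k surface with positive curvature transverse to the
  rays: it is swept out by the rays through a C^k periodic curve c whose projective image is
  a locally strictly convex curve without inflection points, i.e. det(c,c',c'') never vanishes
  (this also makes (lambda,t) |-> lambda c(t) an immersion).\<close>
definition Ck_pos_curved_boundary :: "nat \<Rightarrow> (real^3) set \<Rightarrow> bool" where
  "Ck_pos_curved_boundary k K \<longleftrightarrow>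
     (\<exists>c :: real \<Rightarrow> real^3. Ck_vec k c \<and> (\<forall>t. c (t + 2*pi) = c t)
        \<and> (\<forall>t. det3 (vderiv (vderiv c) t) (vderiv c t) (c t) \<noteq> 0)
        \<and> frontier K - {0} = {l *\<^sub>R c t | l t. l > 0})"

definition hill_solution :: "(real \<Rightarrow> real) \<Rightarrow> (real \<Rightarrow> real) \<Rightarrow> bool" where
  "hill_solution \<alpha> x \<longleftrightarrow> (\<forall>t. x differentiable (at t) \<and> deriv x differentiable (at t)
       \<and> deriv (deriv x) t + \<alpha> t / 2 * x t = 0)"

definition is_monodromy :: "(real \<Rightarrow> real) \<Rightarrow> real^2^2 \<Rightarrow> bool" where
  "is_monodromy \<alpha> T \<longleftrightarrow>
     (\<exists>x :: real \<Rightarrow> real^2. (\<forall>i. hill_solution \<alpha> (\<lambda>t. x t $ i))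
        \<and> (\<forall>a. (\<forall>t. a \<bullet> x t = 0) \<longrightarrow> a = 0)
        \<and> (\<forall>t. x (t + 2*pi) = T *v x t))"

definition has_eigenvalue_one :: "real^2^2 \<Rightarrow> bool" where
  "has_eigenvalue_one T \<longleftrightarrow> (\<exists>v. v \<noteq> 0 \<and> T *v v = v)"

text \<open>gamma (projective image of the boundary of K) has a global periodic Forsyth--Laguerre
  parametrization: a C^3 periodic lift ytilde (period L, one period = one traversal of gamma),
  with det(ytilde'',ytilde',ytilde) = 1 and ytilde''' + betatilde ytilde = 0.\<close>
definition has_global_periodic_FL :: "(real^3) set \<Rightarrow> bool" where
  "has_global_periodic_FL K \<longleftrightarrow>
     (\<exists>L > 0. \<exists>(yt :: real \<Rightarrow> real^3) (bt :: real \<Rightarrow> real).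
        Ck_vec 3 yt \<and> (\<forall>s. yt (s + L) = yt s)
        \<and> (\<forall>s. \<exists>l. l \<noteq> 0 \<and> l *\<^sub>R yt s \<in> frontier K - {0})
        \<and> (\<forall>x \<in> frontier K - {0}. \<exists>!s. s \<in> {0..<L} \<and> (\<exists>l. l \<noteq> 0 \<and> x = l *\<^sub>R yt s))
        \<and> (\<forall>s. det3 (vderiv (vderiv yt) s) (vderiv yt s) (yt s) = 1)
        \<and> (\<forall>s. vderiv (vderiv (vderiv yt)) s + bt s *\<^sub>R yt s = 0))"

end

(*
  Suppose gamma had a global periodic Forsyth-Laguerre lift Z.  Near every t the ray through y(t)
  is spanned by Z(h(t)) for a C^2 reparametrization h, say Z(h(t)) = Lambda(t) y(t).  Both lifts
  are normalised by det(x'',x',x) = 1, which forces h' = Lambda, and one more differentiation gives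
  alpha = Lambda''/Lambda - 3/2 (Lambda'/Lambda)^2, i.e. alpha is the Schwarzian derivative of h.
  Lambda never vanishes and is 2 pi-periodic, so p = |Lambda|^(-1/2) is a positive periodic solution
  of x'' + alpha/2 x = 0.  With the second solution p W, where W' = 1/p^2, the monodromy is the
  unipotent matrix [[1, c], [0, 1]], which has the eigenvalue 1.
*)
theory Submission
  imports Defs
begin

unbundle cross3_syntax

section \<open>Triple products and derivatives of curves\<close>

lemma det3_expand:
  "det3 a b c = a$1*b$2*c$3 + a$2*b$3*c$1 + a$3*b$1*c$2 - a$2*b$1*c$3 - a$3*b$2*c$1 - a$1*b$3*c$2"
  unfolding det3_def det_3 by (simp add: vector_3 algebra_simps)

lemma det3_add [simp]:
  "det3 (a + a') b c = det3 a b c + det3 a' b c"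
  "det3 a (b + b') c = det3 a b c + det3 a b' c"
  "det3 a b (c + c') = det3 a b c + det3 a b c'"
  by (simp_all add: det3_expand algebra_simps)

lemma det3_diff [simp]:
  "det3 (a - a') b c = det3 a b c - det3 a' b c"
  "det3 a (b - b') c = det3 a b c - det3 a b' c"
  "det3 a b (c - c') = det3 a b c - det3 a b c'"
  by (simp_all add: det3_expand algebra_simps)

lemma det3_minus [simp]: "det3 (- a) b c = - det3 a b c" "det3 a (- b) c = - det3 a b c"
  "det3 a b (- c) = - det3 a b c"
  by (simp_all add: det3_expand algebra_simps)

lemma det3_scaleR [simp]:
  "det3 (r *\<^sub>R a) b c = r * det3 a b c"
  "det3 a (r *\<^sub>R b) c = r * det3 a b c"
  "det3 a b (r *\<^sub>R c) = r * det3 a b c"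
  by (simp_all add: det3_expand algebra_simps)

lemma det3_zero [simp]: "det3 0 b c = 0" "det3 a 0 c = 0" "det3 a b 0 = 0"
  by (simp_all add: det3_expand)

lemma det3_same [simp]: "det3 a a c = 0" "det3 a b a = 0" "det3 a b b = 0"
  by (simp_all add: det3_expand algebra_simps)

lemma det3_swap: "det3 b a c = - det3 a b c" "det3 a c b = - det3 a b c"
  by (simp_all add: det3_expand algebra_simps)

lemma has_vector_derivative_vec_nth:
  "(f has_vector_derivative f') F \<Longrightarrow> ((\<lambda>t. f t $ i) has_real_derivative f' $ i) F"
  unfolding has_real_derivative_iff_has_vector_derivative
  by (rule bounded_linear.has_vector_derivative[OF bounded_linear_vec_nth])

lemma has_vector_derivative_vecI:
  fixes f :: "real \<Rightarrow> real^'n"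
  assumes "\<And>i. ((\<lambda>t. f t $ i) has_real_derivative f' $ i) (at t within S)"
  shows "(f has_vector_derivative f') (at t within S)"
  unfolding has_vector_derivative_def
proof (subst has_derivative_componentwise_within, intro ballI)
  fix b :: "real^'n" assume "b \<in> Basis"
  then obtain i where b: "b = axis i 1" by (auto simp: Basis_vec_def)
  show "((\<lambda>x. f x \<bullet> b) has_derivative (\<lambda>x. x *\<^sub>R f' \<bullet> b)) (at t within S)"
    using assms[of i] unfolding b has_field_derivative_def by (simp add: inner_axis mult_commute_abs)
qed

lemma has_vector_derivative_inner_const:
  "(f has_vector_derivative f') F \<Longrightarrow> ((\<lambda>t. f t \<bullet> n) has_real_derivative f' \<bullet> n) F"
  unfolding has_real_derivative_iff_has_vector_derivative
  by (rule bounded_linear.has_vector_derivative[OF bounded_linear_inner_left])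

lemma det3_has_real_derivative:
  assumes "(a has_vector_derivative a') (at t)" "(b has_vector_derivative b') (at t)"
    "(c has_vector_derivative c') (at t)"
  shows "((\<lambda>s. det3 (a s) (b s) (c s)) has_real_derivative
           det3 a' (b t) (c t) + det3 (a t) b' (c t) + det3 (a t) (b t) c') (at t)"
  unfolding det3_expand
  by (rule derivative_eq_intros has_vector_derivative_vec_nth[OF assms(1)]
        has_vector_derivative_vec_nth[OF assms(2)] has_vector_derivative_vec_nth[OF assms(3)] refl)+
     (simp add: algebra_simps)

lemma Ck_3_has_real_derivatives:
  assumes "Ck 3 f"
  shows "DERIV f t :> deriv f t" "DERIV (deriv f) t :> deriv (deriv f) t"
    "DERIV (deriv (deriv f)) t :> deriv (deriv (deriv f)) t"
proof -
  have "(deriv ^^ j) f differentiable (at t)" if "j < 3" for j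
    using assms that unfolding Ck_def by blast
  from this[of 0] this[of 1] this[of 2] show
    "DERIV f t :> deriv f t" "DERIV (deriv f) t :> deriv (deriv f) t"
    "DERIV (deriv (deriv f)) t :> deriv (deriv (deriv f)) t"
    by (simp_all add: DERIV_deriv_iff_real_differentiable numeral_2_eq_2)
qed

lemma Ck_vec_3_has_vector_derivatives:
  fixes y :: "real \<Rightarrow> real^'n"
  assumes "Ck_vec 3 y"
  shows "(y has_vector_derivative vderiv y t) (at t)"
    "(vderiv y has_vector_derivative vderiv (vderiv y) t) (at t)"
    "(vderiv (vderiv y) has_vector_derivative vderiv (vderiv (vderiv y)) t) (at t)"
proof -
  have C: "Ck 3 (\<lambda>t. y t $ i)" for i
    using assms unfolding Ck_vec_def by blast
  have vderiv_nth: "vderiv f t $ i = deriv (\<lambda>s. f s $ i) t" for f :: "real \<Rightarrow> real^'n" and t i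
    by (simp add: vderiv_def)
  show "(y has_vector_derivative vderiv y t) (at t)"
    by (rule has_vector_derivative_vecI) (simp add: vderiv_nth Ck_3_has_real_derivatives[OF C])
  show "(vderiv y has_vector_derivative vderiv (vderiv y) t) (at t)"
    by (rule has_vector_derivative_vecI) (simp add: vderiv_nth Ck_3_has_real_derivatives[OF C])
  show "(vderiv (vderiv y) has_vector_derivative vderiv (vderiv (vderiv y)) t) (at t)"
    by (rule has_vector_derivative_vecI) (simp add: vderiv_nth Ck_3_has_real_derivatives[OF C])
qed

lemma norm_cross_le: "norm (a \<times> c) \<le> norm a * norm c"
proof -
  have "(norm (a \<times> c))\<^sup>2 \<le> (norm a * norm c)\<^sup>2"
    by (metis norm_cross_dot le_add_same_cancel1 zero_le_power2)
  then show ?thesis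
    by (rule power2_le_imp_le) simp
qed

lemma exists_normal_positive:
  fixes z0 z1 :: "'a::real_inner"
  assumes "z0 \<noteq> 0" "\<And>c. z1 \<noteq> c *\<^sub>R z0"
  shows "\<exists>n. z0 \<bullet> n = 0 \<and> z1 \<bullet> n > 0"
proof -
  define n where "n = z1 - (z1 \<bullet> z0 / (z0 \<bullet> z0)) *\<^sub>R z0"
  have "z0 \<bullet> n = 0"
    using assms(1) by (simp add: n_def inner_diff_right inner_commute)
  moreover have "n \<noteq> 0"
    using assms(2) by (simp add: n_def)
  moreover have "z1 = n + (z1 \<bullet> z0 / (z0 \<bullet> z0)) *\<^sub>R z0"
    by (simp add: n_def)
  then have "z1 \<bullet> n = n \<bullet> n + (z1 \<bullet> z0 / (z0 \<bullet> z0)) * (z0 \<bullet> n)"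
    by (metis inner_add_left inner_scaleR_left)
  ultimately show ?thesis
    by auto
qed

abbreviation twice_differentiable_at :: "(real \<Rightarrow> real) \<Rightarrow> real \<Rightarrow> bool" where
  "twice_differentiable_at f t \<equiv> DERIV f t :> deriv f t \<and> DERIV (deriv f) t :> deriv (deriv f) t"

lemma twice_differentiable_transfer:
  fixes f F F' :: "real \<Rightarrow> real"
  assumes "open B" "t \<in> B" and eq: "\<And>s. s \<in> B \<Longrightarrow> f s = F s"
    and F: "\<And>s. s \<in> B \<Longrightarrow> DERIV F s :> F' s" and F': "F' differentiable (at t)"
  shows "twice_differentiable_at f t"
proof
  have f: "DERIV f s :> F' s" if "s \<in> B" for s
    by (rule has_field_derivative_transform_within_open[OF F[OF that] \<open>open B\<close> that]) (simp add: eq)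
  then show "DERIV f t :> deriv f t"
    using \<open>t \<in> B\<close> by (metis DERIV_imp_deriv)
  from F' obtain D where "DERIV F' t :> D"
    unfolding real_differentiable_def by blast
  then have "DERIV (deriv f) t :> D"
    by (rule has_field_derivative_transform_within_open[OF _ \<open>open B\<close> \<open>t \<in> B\<close>])
       (simp add: DERIV_imp_deriv[OF f])
  then show "DERIV (deriv f) t :> deriv (deriv f) t"
    by (metis DERIV_imp_deriv)
qed

lemma isCont_pos_ball:
  fixes f :: "real \<Rightarrow> real"
  assumes "isCont f x" "f x > 0"
  obtains r where "r > 0" "\<And>s. s \<in> ball x r \<Longrightarrow> f s > 0"
proof -
  have "\<forall>\<^sub>F s in at x. f s > 0"
    using assms order_tendstoD(1)[of f "f x" "at x" 0] unfolding isCont_def by blast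
  then obtain r where r: "r > 0" "\<And>s. s \<noteq> x \<Longrightarrow> dist s x < r \<Longrightarrow> f s > 0"
    unfolding eventually_at by blast
  show thesis
  proof (rule that[OF \<open>r > 0\<close>])
    fix s assume "s \<in> ball x r"
    with r assms(2) show "f s > 0"
      by (cases "s = x") (auto simp: dist_commute)
  qed
qed

lemma compact_pos_lower_bound:
  fixes f :: "'a::topological_space \<Rightarrow> real"
  assumes "compact C" "continuous_on C f" "\<And>s. s \<in> C \<Longrightarrow> f s > 0"
  obtains m where "m > 0" "\<And>s. s \<in> C \<Longrightarrow> m \<le> f s"
proof (cases "C = {}")
  case False
  with continuous_attains_inf[OF assms(1) False assms(2)] assms(3) show thesis
    by (metis that)
qed (use that[of 1] in auto)

lemma nonvanishing_continuous_same_sign: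
  fixes f :: "real \<Rightarrow> real"
  assumes "continuous_on UNIV f" and nz: "\<And>t. f t \<noteq> 0"
  shows "f t * f 0 > 0"
proof (rule ccontr)
  assume "\<not> f t * f 0 > 0"
  then have "f t * f 0 < 0"
    using nz[of t] nz[of 0] by (simp add: not_less order.order_iff_strict)
  moreover have "continuous_on {min t 0..max t 0} f"
    using assms(1) by (rule continuous_on_subset) simp
  ultimately obtain x where "f x = 0"
    using IVT'[of f "min t 0" 0 "max t 0"] IVT2'[of f "max t 0" 0 "min t 0"]
    by (cases "t \<le> 0") (auto simp: mult_less_0_iff min_def max_def)
  with nz show False by blast
qed

lemma DERIV_implicit:
  fixes h \<phi> \<psi> :: "real \<Rightarrow> real"
  assumes "open B" "t \<in> B" and eq: "\<And>s. s \<in> B \<Longrightarrow> \<phi> (h s) = \<psi> s"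
    and "isCont h t" and \<phi>: "DERIV \<phi> (h t) :> D" "D \<noteq> 0" and \<psi>: "DERIV \<psi> t :> E"
  shows "DERIV h t :> E / D"
proof -
  obtain g where g: "\<And>z. \<phi> z - \<phi> (h t) = g z * (z - h t)" "isCont g (h t)" "g (h t) = D"
    using \<phi>(1) unfolding CARAT_DERIV by blast
  have "((\<lambda>s. g (h s)) \<longlongrightarrow> D) (at t)"
    using isCont_o2[OF \<open>isCont h t\<close> g(2)] g(3) by (simp add: isCont_def)
  then have "((\<lambda>s. ((\<psi> s - \<psi> t) / (s - t)) / g (h s)) \<longlongrightarrow> E / D) (at t)"
    using \<psi> \<phi>(2) unfolding has_field_derivative_iff by (intro tendsto_divide)
  moreover have "\<forall>\<^sub>F s in at t. ((\<psi> s - \<psi> t) / (s - t)) / g (h s) = (h s - h t) / (s - t)"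
    using tendsto_imp_eventually_ne[OF \<open>((\<lambda>s. g (h s)) \<longlongrightarrow> D) (at t)\<close> \<phi>(2)]
      eventually_at_in_open'[OF \<open>open B\<close> \<open>t \<in> B\<close>]
  proof eventually_elim
    case (elim s)
    then have "\<psi> s - \<psi> t = g (h s) * (h s - h t)"
      using g(1)[of "h s"] eq \<open>t \<in> B\<close> by metis
    with elim(1) show ?case by simp
  qed
  ultimately have "((\<lambda>s. (h s - h t) / (s - t)) \<longlongrightarrow> E / D) (at t)"
    by (rule Lim_transform_eventually)
  then show ?thesis
    unfolding has_field_derivative_iff .
qed

lemma DERIV_pos_imp_inj_on_ball:
  fixes \<phi> :: "real \<Rightarrow> real"
  assumes "\<And>s. s \<in> ball s0 r \<Longrightarrow> DERIV \<phi> s :> \<phi>' s \<and> \<phi>' s > 0"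
  shows "inj_on \<phi> (ball s0 r)"
proof -
  have "\<phi> a < \<phi> b" if "a \<in> ball s0 r" "b \<in> ball s0 r" "a < b" for a b
  proof (rule DERIV_pos_imp_increasing[OF \<open>a < b\<close>])
    fix x assume "a \<le> x" "x \<le> b"
    with that have "x \<in> ball s0 r"
      by (auto simp: dist_real_def)
    with assms show "\<exists>y. DERIV \<phi> x :> y \<and> y > 0"
      by blast
  qed
  then show ?thesis
    by (metis inj_onI linorder_neq_iff order_less_irrefl)
qed

lemma isCont_the_inv_into_ball:
  fixes \<phi> :: "real \<Rightarrow> real"
  assumes inj: "inj_on \<phi> (ball s0 r)" and cont: "\<And>s. s \<in> ball s0 r \<Longrightarrow> isCont \<phi> s"
    and "x \<in> ball s0 r"
  shows "isCont (the_inv_into (ball s0 r) \<phi>) (\<phi> x)"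
proof (rule isCont_inverse_function[where f = \<phi> and x = x and d = "(r - dist s0 x) / 2"])
  show "(r - dist s0 x) / 2 > 0"
    using \<open>x \<in> ball s0 r\<close> by simp
  fix z assume "\<bar>z - x\<bar> \<le> (r - dist s0 x) / 2"
  then have z: "z \<in> ball s0 r"
    using \<open>x \<in> ball s0 r\<close> dist_triangle[of s0 z x] unfolding mem_ball
    by (simp add: dist_real_def abs_minus_commute)
  with inj show "the_inv_into (ball s0 r) \<phi> (\<phi> z) = z"
    by (simp add: the_inv_into_f_f)
  from z show "isCont \<phi> z"
    by (rule cont)
qed

lemma implicit_twice_differentiable:
  fixes \<phi> \<psi> :: "real \<Rightarrow> real"
  assumes \<phi>: "\<And>s. s \<in> ball s0 r \<Longrightarrow> twice_differentiable_at \<phi> s \<and> deriv \<phi> s > 0"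
    and \<psi>: "\<And>t. t \<in> B \<Longrightarrow> twice_differentiable_at \<psi> t \<and> \<psi> t \<in> \<phi> ` ball s0 r" and "open B"
  obtains h where "\<And>t. t \<in> B \<Longrightarrow> h t \<in> ball s0 r \<and> \<phi> (h t) = \<psi> t"
    and "\<And>t s. t \<in> B \<Longrightarrow> s \<in> ball s0 r \<Longrightarrow> \<phi> s = \<psi> t \<Longrightarrow> s = h t"
    and "\<And>t. t \<in> B \<Longrightarrow> twice_differentiable_at h t"
proof -
  have inj: "inj_on \<phi> (ball s0 r)"
    using \<phi> by (intro DERIV_pos_imp_inj_on_ball) blast
  define g where "g = the_inv_into (ball s0 r) \<phi>"
  define h where "h t = g (\<psi> t)" for t
  have h: "h t \<in> ball s0 r \<and> \<phi> (h t) = \<psi> t" if "t \<in> B" for t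
    using \<psi>[OF that] inj by (auto simp: h_def g_def the_inv_into_f_f)
  have h_unique: "s = h t" if "t \<in> B" "s \<in> ball s0 r" "\<phi> s = \<psi> t" for t s
    using h[OF that(1)] that(2,3) inj by (metis inj_onD)
  have h_cont: "isCont h t" if "t \<in> B" for t
  proof -
    have "isCont g (\<phi> (h t))"
      unfolding g_def using inj h[OF that] \<phi>
      by (intro isCont_the_inv_into_ball) (auto intro: DERIV_isCont)
    with h[OF that] show ?thesis
      unfolding h_def using \<psi>[OF that] by (auto intro: isCont_o2 DERIV_isCont)
  qed
  have h': "DERIV h t :> deriv \<psi> t / deriv \<phi> (h t)" if "t \<in> B" for t
    by (rule DERIV_implicit[where \<phi> = \<phi> and \<psi> = \<psi>, OF \<open>open B\<close> that _ h_cont[OF that]])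
      (use h \<phi>[OF h[OF that, THEN conjunct1]] \<psi>[OF that] in auto)
  have "twice_differentiable_at h t" if "t \<in> B" for t
  proof (rule twice_differentiable_transfer[OF \<open>open B\<close> that refl h'])
    have "h differentiable (at t)" and \<phi>'': "deriv \<phi> differentiable (at (h t))"
      and \<psi>'': "deriv \<psi> differentiable (at t)" and "deriv \<phi> (h t) \<noteq> 0"
      using h'[OF that] \<phi>[of "h t"] \<psi>[OF that] h[OF that]
      by (auto simp: real_differentiable_def)
    moreover from \<phi>'' this(1) have "(\<lambda>t. deriv \<phi> (h t)) differentiable (at t)"
      by (rule differentiable_compose)
    ultimately show "(\<lambda>t. deriv \<psi> t / deriv \<phi> (h t)) differentiable (at t)"
      using \<psi>'' by (intro differentiable_divide)
  qed
  with h h_unique show thesis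
    by (intro that) auto
qed

lemma DERIV_inner_quotient:
  fixes u v :: "real \<Rightarrow> 'a::real_inner"
  assumes "(u has_vector_derivative u') (at t)" "(v has_vector_derivative v') (at t)" "v t \<bullet> b \<noteq> 0"
  shows "DERIV (\<lambda>t. (u t \<bullet> a) / (v t \<bullet> b)) t
           :> ((u' \<bullet> a) * (v t \<bullet> b) - (u t \<bullet> a) * (v' \<bullet> b)) / ((v t \<bullet> b) * (v t \<bullet> b))"
  using assms by (intro DERIV_divide has_vector_derivative_inner_const)

lemma inner_quotient_twice_differentiable:
  fixes u v :: "real \<Rightarrow> 'a::real_inner"
  assumes "open B" "t \<in> B"
    and u: "\<And>s. s \<in> B \<Longrightarrow> (u has_vector_derivative u' s) (at s)" "u' differentiable (at t)"
    and v: "\<And>s. s \<in> B \<Longrightarrow> (v has_vector_derivative v' s) (at s)" "v' differentiable (at t)"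
    and nz: "\<And>s. s \<in> B \<Longrightarrow> v s \<bullet> b \<noteq> 0"
  shows "twice_differentiable_at (\<lambda>t. (u t \<bullet> a) / (v t \<bullet> b)) t"
proof (rule twice_differentiable_transfer[OF assms(1,2) refl DERIV_inner_quotient[OF u(1) v(1) nz]])
  have "u differentiable (at t)" "v differentiable (at t)"
    using u(1) v(1) \<open>t \<in> B\<close> by (auto intro: differentiableI_vector)
  with u(2) v(2) nz[OF \<open>t \<in> B\<close>] show
    "(\<lambda>s. ((u' s \<bullet> a) * (v s \<bullet> b) - (u s \<bullet> a) * (v' s \<bullet> b)) / ((v s \<bullet> b) * (v s \<bullet> b)))
       differentiable (at t)"
    by simp
qed

section \<open>Hill's equation\<close>

lemma hill_solutionI:
  assumes "\<And>t. DERIV x t :> x' t" "\<And>t. DERIV x' t :> x'' t" "\<And>t. x'' t + \<alpha> t / 2 * x t = 0"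
  shows "hill_solution \<alpha> x"
proof -
  have "deriv x = x'" "deriv x' = x''"
    using assms(1,2) by (simp_all add: fun_eq_iff DERIV_imp_deriv)
  with assms show ?thesis
    unfolding hill_solution_def by (auto simp: real_differentiable_def)
qed

lemma hill_solution_has_derivatives:
  assumes "hill_solution \<alpha> x"
  shows "DERIV x t :> deriv x t" "DERIV (deriv x) t :> deriv (deriv x) t"
    "deriv (deriv x) t + \<alpha> t / 2 * x t = 0"
  using assms unfolding hill_solution_def by (auto simp: DERIV_deriv_iff_real_differentiable)

lemma hill_solution_powr_neg_half:
  fixes \<mu> \<mu>' \<mu>'' :: "real \<Rightarrow> real"
  assumes pos: "\<And>t. \<mu> t > 0" and \<mu>: "\<And>t. DERIV \<mu> t :> \<mu>' t" "\<And>t. DERIV \<mu>' t :> \<mu>'' t"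
    and \<alpha>: "\<And>t. \<alpha> t = \<mu>'' t / \<mu> t - 3/2 * (\<mu>' t / \<mu> t)^2"
  shows "hill_solution \<alpha> (\<lambda>t. \<mu> t powr (-1/2))"
proof (rule hill_solutionI)
  define p where "p t = \<mu> t powr (-1/2)" for t
  have "\<mu> t powr (-1/2 - 1) = p t / \<mu> t" for t
    using pos[of t] powr_diff[of "\<mu> t" "-1/2" 1] by (simp add: p_def)
  then show p': "DERIV (\<lambda>t. \<mu> t powr (-1/2)) t :> - \<mu>' t / (2 * \<mu> t) * p t" for t
    using DERIV_fun_powr[OF \<mu>(1) pos, of "-1/2" t] by (simp add: mult.commute)
  show "DERIV (\<lambda>t. - \<mu>' t / (2 * \<mu> t) * p t) t
          :> (3 * \<mu>' t ^ 2 / (4 * \<mu> t ^ 2) - \<mu>'' t / (2 * \<mu> t)) * p t" for t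
    using pos[of t] p'[unfolded p_def[symmetric, abs_def]]
    by (auto intro!: derivative_eq_intros \<mu> simp: field_simps power2_eq_square)
  show "(3 * \<mu>' t ^ 2 / (4 * \<mu> t ^ 2) - \<mu>'' t / (2 * \<mu> t)) * p t + \<alpha> t / 2 * \<mu> t powr (-1/2) = 0"
    for t
    using pos[of t] by (simp add: \<alpha> p_def field_simps power2_eq_square)
qed

lemma hill_solution_mult_antiderivative:
  assumes x: "hill_solution \<alpha> x" and W: "\<And>t. DERIV W t :> 1 / (x t)^2" and nz: "\<And>t. x t \<noteq> 0"
  shows "hill_solution \<alpha> (\<lambda>t. x t * W t)"
proof (rule hill_solutionI)
  note x' = hill_solution_has_derivatives[OF x]
  show "DERIV (\<lambda>t. x t * W t) t :> deriv x t * W t + 1 / x t" for t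
    using nz[of t] by (auto intro!: derivative_eq_intros x' W simp: field_simps power2_eq_square)
  show "DERIV (\<lambda>t. deriv x t * W t + 1 / x t) t :> deriv (deriv x) t * W t" for t
    using nz[of t] by (auto intro!: derivative_eq_intros x' W simp: field_simps power2_eq_square)
  show "deriv (deriv x) t * W t + \<alpha> t / 2 * (x t * W t) = 0" for t
  proof -
    have "deriv (deriv x) t * W t + \<alpha> t / 2 * (x t * W t) = (deriv (deriv x) t + \<alpha> t / 2 * x t) * W t"
      by (simp add: algebra_simps)
    with x'(3)[of t] show ?thesis
      by simp
  qed
qed

lemma periodic_has_antiderivative:
  fixes f :: "real \<Rightarrow> real"
  assumes "\<And>t. isCont f t" and per: "\<And>t. f (t + T) = f t"
  obtains W c where "\<And>t. DERIV W t :> f t" "\<And>t. W (t + T) = W t + c"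
proof -
  obtain W where W: "\<And>t. DERIV W t :> f t"
    using einterval_antiderivative[of "-\<infinity>" "\<infinity>" f] assms(1)
    by (auto simp: has_real_derivative_iff_has_vector_derivative)
  have "DERIV (\<lambda>t. W (t + T) - W t) t :> 0" for t
    using DERIV_diff[OF W[of "t + T", unfolded DERIV_shift] W[of t]] by (simp add: per)
  then have "W (t + T) - W t = W T - W 0" for t
    using DERIV_isconst_all[of "\<lambda>t. W (t + T) - W t" t 0] by simp
  with W show thesis
    by (intro that[of W "W T - W 0"]) (simp_all add: algebra_simps)
qed

lemma periodic_hill_solution_imp_eigenvalue_one:
  assumes p: "hill_solution \<alpha> p" and pos: "\<And>t. p t > 0" and per: "\<And>t. p (t + 2*pi) = p t"
  shows "\<exists>T. is_monodromy \<alpha> T \<and> has_eigenvalue_one T"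
proof -
  have "isCont (\<lambda>t. 1 / (p t)^2) t" for t
    using pos[of t] DERIV_isCont[OF hill_solution_has_derivatives(1)[OF p]]
    by (intro continuous_intros) auto
  then obtain W c where W: "\<And>t. DERIV W t :> 1 / (p t)^2" and W_shift: "\<And>t. W (t + 2*pi) = W t + c"
    using periodic_has_antiderivative[of "\<lambda>t. 1 / (p t)^2" "2*pi"] per by metis
  have "1 / (p t)^2 > 0" for t
    using pos[of t] by simp
  with W have "W 0 < W 1"
    by (intro DERIV_pos_imp_increasing[of 0 1 W]) (simp, metis)
  define x where "x t = (vector [p t * W t, p t] :: real^2)" for t
  define T where "T = (vector [vector [1, c], vector [0, 1]] :: real^2^2)"
  have "is_monodromy \<alpha> T"
    unfolding is_monodromy_def
  proof (intro exI[of _ x] conjI allI impI)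
    show "hill_solution \<alpha> (\<lambda>t. x t $ i)" for i
      using exhaust_2[of i] hill_solution_mult_antiderivative[OF p W] pos p
      by (auto simp: x_def order_less_imp_not_eq2)
    show "x (t + 2*pi) = T *v x t" for t
      by (simp add: x_def T_def per W_shift vec_eq_iff forall_2 matrix_vector_mult_def sum_2)
         (simp add: algebra_simps)
    fix a :: "real^2"
    assume "\<forall>t. a \<bullet> x t = 0"
    then have "p t * (a $ 1 * W t + a $ 2) = 0" for t
      by (auto simp: x_def inner_vec_def sum_2 algebra_simps)
    then have "a $ 1 * W t + a $ 2 = 0" for t
      using pos[of t] by (metis mult_eq_0_iff order_less_irrefl)
    from this[of 0] this[of 1] have "a $ 1 * W 1 = a $ 1 * W 0"
      by linarith
    with \<open>W 0 < W 1\<close> have "a $ 1 = 0"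
      by simp
    with \<open>a $ 1 * W 0 + a $ 2 = 0\<close> show "a = 0"
      by (simp add: vec_eq_iff forall_2)
  qed
  moreover have "has_eigenvalue_one T"
    unfolding has_eigenvalue_one_def T_def
    by (rule exI[of _ "vector [1, 0]"]) (simp add: vec_eq_iff forall_2 matrix_vector_mult_def sum_2)
  ultimately show ?thesis
    by blast
qed

section \<open>Comparison with a Forsyth--Laguerre lift\<close>

locale FL_comparison =
  fixes y Z :: "real \<Rightarrow> real^3" and \<alpha> \<beta> b :: "real \<Rightarrow> real" and L :: real
  assumes y_C3: "Ck_vec 3 y" and y_periodic: "\<And>t. y (t + 2*pi) = y t"
    and y_ode: "\<And>t. vderiv (vderiv (vderiv y)) t + (2 * \<alpha> t) *\<^sub>R vderiv y t
              + (deriv \<alpha> t) *\<^sub>R y t + (\<beta> t) *\<^sub>R y t = 0"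
    and y_det: "\<And>t. det3 (vderiv (vderiv y) t) (vderiv y t) (y t) = 1"
    and Z_C3: "Ck_vec 3 Z" and L_pos: "L > 0" and Z_periodic: "\<And>s. Z (s + L) = Z s"
    and Z_det: "\<And>s. det3 (vderiv (vderiv Z) s) (vderiv Z s) (Z s) = 1"
    and Z_ode: "\<And>s. vderiv (vderiv (vderiv Z)) s + b s *\<^sub>R Z s = 0"
    and same_ray: "\<And>t. \<exists>!s. s \<in> {0..<L} \<and> (\<exists>l. l \<noteq> 0 \<and> y t = l *\<^sub>R Z s)"
begin

abbreviation "y' \<equiv> vderiv y"
abbreviation "y'' \<equiv> vderiv y'"
abbreviation "y''' \<equiv> vderiv y''"
abbreviation "Z' \<equiv> vderiv Z"
abbreviation "Z'' \<equiv> vderiv Z'"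
abbreviation "Z''' \<equiv> vderiv Z''"

lemma y_derivatives:
  "(y has_vector_derivative y' t) (at t)" "(y' has_vector_derivative y'' t) (at t)"
  "(y'' has_vector_derivative y''' t) (at t)"
  using Ck_vec_3_has_vector_derivatives[OF y_C3] by auto

lemma Z_derivatives:
  "(Z has_vector_derivative Z' s) (at s)" "(Z' has_vector_derivative Z'' s) (at s)"
  "(Z'' has_vector_derivative Z''' s) (at s)"
  using Ck_vec_3_has_vector_derivatives[OF Z_C3] by auto

lemma y_nonzero: "y t \<noteq> 0"
  using y_det[of t] by auto

lemma Z_nonzero: "Z s \<noteq> 0"
  using Z_det[of s] by auto

lemma Z'_not_parallel: "Z' s \<noteq> c *\<^sub>R Z s"
  using Z_det[of s] by auto

lemma y'''_eq: "y''' t = (- 2 * \<alpha> t) *\<^sub>R y' t - (deriv \<alpha> t + \<beta> t) *\<^sub>R y t"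
proof -
  have "y''' t = - ((2 * \<alpha> t) *\<^sub>R y' t + deriv \<alpha> t *\<^sub>R y t + \<beta> t *\<^sub>R y t)"
    using y_ode[of t] by (subst eq_neg_iff_add_eq_0) (simp add: add.assoc)
  then show ?thesis
    by (simp add: scaleR_add_left)
qed

lemma det_y_permuted: "det3 (y' t) (y'' t) (y t) = -1" "det3 (y t) (y'' t) (y' t) = 1"
  using y_det[of t] det3_swap[of "y'' t" "y' t" "y t"] det3_swap[of "y t" "y'' t" "y' t"]
  by simp_all

lemma Z'''_eq: "Z''' s = - b s *\<^sub>R Z s"
  using Z_ode[of s] by (simp add: eq_neg_iff_add_eq_0)

lemma Z_periodic_int: "Z (s + of_int k * L) = Z s"
proof (induction k rule: int_induct[where k = 0])
  case (step1 i)
  then show ?case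
    using Z_periodic[of "s + of_int i * L"] by (simp add: algebra_simps)
next
  case (step2 i)
  then show ?case
    using Z_periodic[of "s + of_int (i - 1) * L"] by (simp add: algebra_simps)
qed simp

lemma Z_representative: "\<exists>s'\<in>{0..<L}. Z s' = Z s"
proof
  define k where "k = \<lfloor>s / L\<rfloor>"
  have "of_int k * L \<le> s" "s < of_int k * L + L"
    using L_pos floor_divide_lower[OF L_pos, of s] floor_divide_upper[OF L_pos, of s]
    by (simp_all add: k_def algebra_simps)
  then show "s - of_int k * L \<in> {0..<L}"
    by simp
  show "Z (s - of_int k * L) = Z s"
    using Z_periodic_int[of "s - of_int k * L" k] by simp
qed

definition fl_param :: "real \<Rightarrow> real" where
  "fl_param t = (THE s. s \<in> {0..<L} \<and> (\<exists>l. l \<noteq> 0 \<and> y t = l *\<^sub>R Z s))"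

lemma fl_param: "fl_param t \<in> {0..<L}" "\<exists>l. l \<noteq> 0 \<and> y t = l *\<^sub>R Z (fl_param t)"
  using theI'[OF same_ray[of t]] unfolding fl_param_def by auto

lemma fl_param_unique: "s \<in> {0..<L} \<Longrightarrow> l \<noteq> 0 \<Longrightarrow> y t = l *\<^sub>R Z s \<Longrightarrow> s = fl_param t"
  using same_ray[of t] fl_param by blast

lemma fl_param_periodic: "fl_param (t + 2*pi) = fl_param t"
  unfolding fl_param_def y_periodic ..

definition fl_scale :: "real \<Rightarrow> real" where
  "fl_scale t = (THE m. Z (fl_param t) = m *\<^sub>R y t)"

lemma fl_scale: "Z (fl_param t) = fl_scale t *\<^sub>R y t" "fl_scale t \<noteq> 0"
proof -
  obtain l where l: "l \<noteq> 0" "y t = l *\<^sub>R Z (fl_param t)"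
    using fl_param(2) by blast
  then have "Z (fl_param t) = (1 / l) *\<^sub>R y t"
    by simp
  moreover have "m = 1 / l" if "Z (fl_param t) = m *\<^sub>R y t" for m
    using that calculation y_nonzero[of t] by (metis scaleR_cancel_right)
  ultimately have "fl_scale t = 1 / l"
    unfolding fl_scale_def by (rule the_equality)
  with l \<open>Z (fl_param t) = (1 / l) *\<^sub>R y t\<close>
  show "Z (fl_param t) = fl_scale t *\<^sub>R y t" "fl_scale t \<noteq> 0"
    by auto
qed

lemma fl_scale_eq:
  assumes "l \<noteq> 0" "y t = l *\<^sub>R Z s"
  shows "Z s = fl_scale t *\<^sub>R y t"
proof -
  obtain s' where s': "s' \<in> {0..<L}" "Z s' = Z s"
    using Z_representative by blast
  with assms have "s' = fl_param t"
    by (intro fl_param_unique) auto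
  with s' fl_scale(1)[of t] show ?thesis
    by simp
qed

lemma fl_scale_periodic: "fl_scale (t + 2*pi) = fl_scale t"
  unfolding fl_scale_def fl_param_periodic y_periodic ..

lemma parallel_imp_fl_param:
  assumes "s \<in> {0..L}" "y t \<times> Z s = 0"
  shows "s = fl_param t \<or> s = fl_param t + L"
proof -
  have "collinear {0, Z s, y t}"
    using assms(2) unfolding cross_eq_0 by (simp add: insert_commute)
  then obtain l where l: "y t = l *\<^sub>R Z s"
    using Z_nonzero[of s] unfolding collinear_lemma by auto
  with y_nonzero have "l \<noteq> 0"
    by auto
  show ?thesis
  proof (cases "s = L")
    case True
    with l Z_periodic[of 0] have "y t = l *\<^sub>R Z 0"
      by simp
    with \<open>l \<noteq> 0\<close> L_pos have "0 = fl_param t"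
      by (intro fl_param_unique) auto
    with True show ?thesis
      by simp
  next
    case False
    with assms(1) l \<open>l \<noteq> 0\<close> show ?thesis
      using fl_param_unique[of s l t] by auto
  qed
qed

lemma Z_continuous_on: "continuous_on A Z"
  using Z_derivatives(1) by (metis continuous_at_imp_continuous_on has_vector_derivative_continuous)

lemma cross_lower_bound_off_fl_param:
  fixes t0 \<epsilon> :: real
  assumes "\<epsilon> > 0"
  defines "C \<equiv> {0..L} - (ball (fl_param t0) \<epsilon> \<union> ball (fl_param t0 - L) \<epsilon> \<union> ball (fl_param t0 + L) \<epsilon>)"
  obtains m where "m > 0" "\<And>s. s \<in> C \<Longrightarrow> m \<le> norm (y t0 \<times> Z s)"
proof (rule compact_pos_lower_bound)
  show "compact C"
    unfolding C_def by (intro compact_diff compact_Icc open_Un open_ball)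
  show "continuous_on C (\<lambda>s. norm (y t0 \<times> Z s))"
    by (intro continuous_intros continuous_on_cross Z_continuous_on)
  show "norm (y t0 \<times> Z s) > 0" if "s \<in> C" for s
    using that parallel_imp_fl_param[of s t0] assms unfolding C_def by force
qed (rule that)

lemma fl_param_continuous_mod_period:
  assumes "\<epsilon> > 0"
  shows "\<exists>\<delta>>0. \<forall>t\<in>ball t0 \<delta>. \<exists>s\<in>ball (fl_param t0) \<epsilon>. \<exists>l. l \<noteq> 0 \<and> y t = l *\<^sub>R Z s"
proof -
  define \<sigma>0 where "\<sigma>0 = fl_param t0"
  define C where "C = {0..L} - (ball \<sigma>0 \<epsilon> \<union> ball (\<sigma>0 - L) \<epsilon> \<union> ball (\<sigma>0 + L) \<epsilon>)"
  obtain m where m: "m > 0" "\<And>s. s \<in> C \<Longrightarrow> m \<le> norm (y t0 \<times> Z s)"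
    using cross_lower_bound_off_fl_param[OF assms, of t0] unfolding C_def \<sigma>0_def by blast
  obtain M where M: "M > 0" "\<And>s. s \<in> {0..L} \<Longrightarrow> norm (Z s) \<le> M"
    using compact_imp_bounded[OF compact_continuous_image[OF Z_continuous_on compact_Icc[of 0 L]]]
    unfolding bounded_pos by auto
  obtain \<delta> where \<delta>: "\<delta> > 0" "\<And>t. dist t t0 < \<delta> \<Longrightarrow> dist (y t) (y t0) < m / M"
    using has_vector_derivative_continuous[OF y_derivatives(1), of t0] m(1) M(1)
    unfolding continuous_at_eps_delta by (meson divide_pos_pos)
  have "\<exists>s\<in>ball \<sigma>0 \<epsilon>. \<exists>l. l \<noteq> 0 \<and> y t = l *\<^sub>R Z s" if "t \<in> ball t0 \<delta>" for t
  proof -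
    define s where "s = fl_param t"
    obtain l where l: "l \<noteq> 0" "y t = l *\<^sub>R Z s"
      using fl_param(2) unfolding s_def by blast
    have s: "s \<in> {0..<L}"
      using fl_param(1) unfolding s_def .
    have "y t0 \<times> Z s = (y t0 - y t) \<times> Z s"
      using l(2) by (simp add: cross_mult_left Cross3.left_diff_distrib)
    then have "norm (y t0 \<times> Z s) \<le> norm (y t0 - y t) * M"
      using norm_cross_le[of "y t0 - y t" "Z s"] M(2)[of s] s
      by (smt (verit) atLeastLessThan_iff atLeastAtMost_iff mult_left_mono norm_ge_zero)
    also have "\<dots> < m"
      using \<delta>(2)[of t] that M(1) by (simp add: dist_commute dist_norm norm_minus_commute field_simps)
    finally have "s \<notin> C"
      using m(2) by force
    then have "s \<in> ball \<sigma>0 \<epsilon> \<or> s + L \<in> ball \<sigma>0 \<epsilon> \<or> s - L \<in> ball \<sigma>0 \<epsilon>"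
      using s unfolding C_def by (auto simp: dist_real_def)
    moreover have "y t = l *\<^sub>R Z (s + L)" "y t = l *\<^sub>R Z (s - L)"
      using l(2) Z_periodic[of s] Z_periodic[of "s - L"] by auto
    ultimately show ?thesis
      using l by blast
  qed
  with \<delta>(1) show ?thesis
    unfolding \<sigma>0_def by blast
qed

lemma projective_chart:
  obtains r w n where "r > 0"
    "\<And>s. s \<in> ball \<sigma> r \<Longrightarrow> Z s \<bullet> w > 0 \<and> twice_differentiable_at (\<lambda>s. (Z s \<bullet> n) / (Z s \<bullet> w)) s
            \<and> deriv (\<lambda>s. (Z s \<bullet> n) / (Z s \<bullet> w)) s > 0"
proof -
  define w where "w = Z \<sigma>"
  obtain n where n: "w \<bullet> n = 0" "Z' \<sigma> \<bullet> n > 0"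
    using exists_normal_positive[OF Z_nonzero Z'_not_parallel] unfolding w_def by blast
  define \<phi> where "\<phi> s = (Z s \<bullet> n) / (Z s \<bullet> w)" for s
  have "isCont (\<lambda>s. Z s \<bullet> w) \<sigma>"
    using has_vector_derivative_continuous[OF Z_derivatives(1)] by (intro continuous_intros)
  then obtain r1 where r1: "r1 > 0" "\<And>s. s \<in> ball \<sigma> r1 \<Longrightarrow> Z s \<bullet> w > 0"
    using isCont_pos_ball[where f = "\<lambda>s. Z s \<bullet> w" and x = \<sigma>] Z_nonzero[of \<sigma>] unfolding w_def by auto
  have \<phi>_C2: "twice_differentiable_at \<phi> s" if "s \<in> ball \<sigma> r1" for s
    unfolding \<phi>_def[abs_def]
    by (rule inner_quotient_twice_differentiable[OF open_ball that, where u' = Z' and v' = Z'])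
       (use Z_derivatives in \<open>auto intro: differentiableI_vector\<close>, use r1(2) in force)
  have "DERIV \<phi> \<sigma> :> ((Z' \<sigma> \<bullet> n) * (w \<bullet> w) - (w \<bullet> n) * (Z' \<sigma> \<bullet> w)) / ((w \<bullet> w) * (w \<bullet> w))"
    unfolding \<phi>_def[abs_def] w_def
    by (rule DERIV_inner_quotient[OF Z_derivatives(1) Z_derivatives(1)]) (simp add: Z_nonzero)
  then have "deriv \<phi> \<sigma> > 0"
    using n Z_nonzero[of \<sigma>] by (simp add: DERIV_imp_deriv w_def)
  moreover have "isCont (deriv \<phi>) \<sigma>"
    using \<phi>_C2[of \<sigma>] r1(1) by (auto intro: DERIV_isCont)
  ultimately obtain r2 where r2: "r2 > 0" "\<And>s. s \<in> ball \<sigma> r2 \<Longrightarrow> deriv \<phi> s > 0"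
    using isCont_pos_ball by blast
  show thesis
    by (rule that[of "min r1 r2" w n]) (use r1 r2 \<phi>_C2 in \<open>auto simp: \<phi>_def[abs_def]\<close>)
qed

lemma fl_scale_twice_differentiable:
  assumes "open B" "t \<in> B"
    and Zh: "\<And>s. s \<in> B \<Longrightarrow> Z (h s) = fl_scale s *\<^sub>R y s"
    and h_C2: "\<And>s. s \<in> B \<Longrightarrow> twice_differentiable_at h s"
    and y_w_nonzero: "\<And>s. s \<in> B \<Longrightarrow> y s \<bullet> w \<noteq> 0"
  shows "twice_differentiable_at fl_scale t"
proof -
  define \<Lambda> where "\<Lambda> s = (Z (h s) \<bullet> w) / (y s \<bullet> w)" for s
  have Zh': "((\<lambda>s. Z (h s)) has_vector_derivative deriv h s *\<^sub>R Z' (h s)) (at s)" if "s \<in> B" for s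
    using vector_diff_chain_at[OF _ Z_derivatives(1)] h_C2[OF that]
    by (simp add: o_def has_real_derivative_iff_has_vector_derivative)
  have \<Lambda>_C2: "twice_differentiable_at \<Lambda> s" if "s \<in> B" for s
  proof -
    have h_diff: "h differentiable (at s)" and h'_diff: "deriv h differentiable (at s)"
      using h_C2[OF that] by (auto simp: real_differentiable_def)
    have Z'h_diff: "(\<lambda>s. Z' (h s)) differentiable (at s)"
      using differentiableI_vector[OF Z_derivatives(2)] h_diff by (rule differentiable_compose)
    show ?thesis
      unfolding \<Lambda>_def[abs_def]
      by (rule inner_quotient_twice_differentiable[OF \<open>open B\<close> that,
            where u' = "\<lambda>s. deriv h s *\<^sub>R Z' (h s)" and v' = y'])
         (use Zh' y_derivatives y_w_nonzero h'_diff Z'h_diff in \<open>auto intro: differentiableI_vector\<close>)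
  qed
  show ?thesis
  proof (rule twice_differentiable_transfer[OF \<open>open B\<close> \<open>t \<in> B\<close>, where F = \<Lambda> and F' = "deriv \<Lambda>"])
    show "fl_scale s = \<Lambda> s" if "s \<in> B" for s
      using Zh[OF that] y_w_nonzero[OF that] by (simp add: \<Lambda>_def)
  qed (use \<Lambda>_C2 \<open>t \<in> B\<close> in \<open>auto simp: real_differentiable_def\<close>)
qed

lemma local_reparametrization:
  obtains B h where "open B" "t0 \<in> B"
    "\<And>t. t \<in> B \<Longrightarrow> Z (h t) = fl_scale t *\<^sub>R y t"
    "\<And>t. t \<in> B \<Longrightarrow> twice_differentiable_at h t"
    "\<And>t. t \<in> B \<Longrightarrow> twice_differentiable_at fl_scale t"
proof -
  define \<sigma>0 where "\<sigma>0 = fl_param t0"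
  obtain r w n where "r > 0" and chart: "\<And>s. s \<in> ball \<sigma>0 r \<Longrightarrow> Z s \<bullet> w > 0
      \<and> twice_differentiable_at (\<lambda>s. (Z s \<bullet> n) / (Z s \<bullet> w)) s \<and> deriv (\<lambda>s. (Z s \<bullet> n) / (Z s \<bullet> w)) s > 0"
    by (rule projective_chart[where \<sigma> = \<sigma>0]) blast
  define \<phi> where "\<phi> s = (Z s \<bullet> n) / (Z s \<bullet> w)" for s
  define \<psi> where "\<psi> t = (y t \<bullet> n) / (y t \<bullet> w)" for t
  obtain \<delta> where "\<delta> > 0" and \<delta>: "\<forall>t\<in>ball t0 \<delta>. \<exists>s\<in>ball \<sigma>0 r. \<exists>l. l \<noteq> 0 \<and> y t = l *\<^sub>R Z s"
    using fl_param_continuous_mod_period[OF \<open>r > 0\<close>, of t0] unfolding \<sigma>0_def by blast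
  define B where "B = ball t0 \<delta>"
  have "open B" "t0 \<in> B"
    using \<open>\<delta> > 0\<close> by (simp_all add: B_def)
  have ray: "\<exists>s\<in>ball \<sigma>0 r. \<exists>l. l \<noteq> 0 \<and> y t = l *\<^sub>R Z s \<and> y t \<bullet> w \<noteq> 0 \<and> \<psi> t = \<phi> s"
    if t: "t \<in> B" for t
  proof -
    obtain s l where s: "s \<in> ball \<sigma>0 r" and l: "l \<noteq> 0" "y t = l *\<^sub>R Z s"
      using \<delta> t unfolding B_def by blast
    with chart[OF s] have "y t \<bullet> w \<noteq> 0" "\<psi> t = \<phi> s"
      by (simp_all add: \<phi>_def \<psi>_def)
    with s l show ?thesis
      by blast
  qed
  have y_w_nonzero: "y t \<bullet> w \<noteq> 0" if "t \<in> B" for t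
    using ray[OF that] by blast
  have \<psi>_C2: "twice_differentiable_at \<psi> t" if "t \<in> B" for t
    unfolding \<psi>_def[abs_def]
    by (rule inner_quotient_twice_differentiable[OF \<open>open B\<close> that, where u' = y' and v' = y'])
       (use y_derivatives y_w_nonzero in \<open>auto intro: differentiableI_vector\<close>)
  have \<phi>_C2: "twice_differentiable_at \<phi> s \<and> deriv \<phi> s > 0" if "s \<in> ball \<sigma>0 r" for s
    using chart[OF that] unfolding \<phi>_def[abs_def] by blast
  have \<psi>_range: "twice_differentiable_at \<psi> t \<and> \<psi> t \<in> \<phi> ` ball \<sigma>0 r" if "t \<in> B" for t
    using \<psi>_C2[OF that] ray[OF that] by blast
  obtain h where h: "\<And>t. t \<in> B \<Longrightarrow> h t \<in> ball \<sigma>0 r \<and> \<phi> (h t) = \<psi> t"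
    and h_unique: "\<And>t s. t \<in> B \<Longrightarrow> s \<in> ball \<sigma>0 r \<Longrightarrow> \<phi> s = \<psi> t \<Longrightarrow> s = h t"
    and h_C2: "\<And>t. t \<in> B \<Longrightarrow> twice_differentiable_at h t"
    using implicit_twice_differentiable[OF \<phi>_C2 \<psi>_range \<open>open B\<close>] by blast
  have Zh: "Z (h t) = fl_scale t *\<^sub>R y t" if "t \<in> B" for t
    using ray[OF that] h_unique[OF that] fl_scale_eq by metis
  have "twice_differentiable_at fl_scale t" if "t \<in> B" for t
    using \<open>open B\<close> that Zh h_C2 y_w_nonzero by (rule fl_scale_twice_differentiable)
  with \<open>open B\<close> \<open>t0 \<in> B\<close> Zh h_C2 show thesis
    by (rule that)
qed

end

locale FL_chart = FL_comparison +
  fixes B :: "real set" and h :: "real \<Rightarrow> real"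
  assumes B_open: "open B"
    and chart: "\<And>t. t \<in> B \<Longrightarrow> Z (h t) = fl_scale t *\<^sub>R y t"
    and h_C2: "\<And>t. t \<in> B \<Longrightarrow> twice_differentiable_at h t"
    and scale_C2: "\<And>t. t \<in> B \<Longrightarrow> twice_differentiable_at fl_scale t"
begin

abbreviation "\<Lambda> \<equiv> fl_scale"
abbreviation "\<Lambda>' \<equiv> deriv \<Lambda>"
abbreviation "\<Lambda>'' \<equiv> deriv \<Lambda>'"
abbreviation "h' \<equiv> deriv h"
abbreviation "h'' \<equiv> deriv h'"

lemma Zh_derivatives:
  assumes "t \<in> B"
  shows "((\<lambda>s. Z (h s)) has_vector_derivative h' t *\<^sub>R Z' (h t)) (at t)"
    "((\<lambda>s. Z' (h s)) has_vector_derivative h' t *\<^sub>R Z'' (h t)) (at t)"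
    "((\<lambda>s. Z'' (h s)) has_vector_derivative h' t *\<^sub>R Z''' (h t)) (at t)"
proof -
  have "(h has_vector_derivative h' t) (at t)"
    using h_C2[OF assms] by (simp add: has_real_derivative_iff_has_vector_derivative)
  from vector_diff_chain_at[OF this Z_derivatives(1)] vector_diff_chain_at[OF this Z_derivatives(2)]
    vector_diff_chain_at[OF this Z_derivatives(3)]
  show "((\<lambda>s. Z (h s)) has_vector_derivative h' t *\<^sub>R Z' (h t)) (at t)"
    "((\<lambda>s. Z' (h s)) has_vector_derivative h' t *\<^sub>R Z'' (h t)) (at t)"
    "((\<lambda>s. Z'' (h s)) has_vector_derivative h' t *\<^sub>R Z''' (h t)) (at t)"
    by (simp_all add: o_def)
qed

lemma chart_derivatives:
  assumes "t \<in> B"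
  shows "h' t *\<^sub>R Z' (h t) = \<Lambda> t *\<^sub>R y' t + \<Lambda>' t *\<^sub>R y t"
    and "h' t *\<^sub>R (h' t *\<^sub>R Z'' (h t)) + h'' t *\<^sub>R Z' (h t)
           = \<Lambda> t *\<^sub>R y'' t + (2 * \<Lambda>' t) *\<^sub>R y' t + \<Lambda>'' t *\<^sub>R y t"
proof -
  have first: "h' s *\<^sub>R Z' (h s) = \<Lambda> s *\<^sub>R y' s + \<Lambda>' s *\<^sub>R y s" if "s \<in> B" for s
  proof -
    have "((\<lambda>s. \<Lambda> s *\<^sub>R y s) has_vector_derivative \<Lambda> s *\<^sub>R y' s + \<Lambda>' s *\<^sub>R y s) (at s)"
      using has_vector_derivative_scaleR[OF scale_C2[OF that, THEN conjunct1] y_derivatives(1)] by simp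
    then have "((\<lambda>s. Z (h s)) has_vector_derivative \<Lambda> s *\<^sub>R y' s + \<Lambda>' s *\<^sub>R y s) (at s)"
      by (rule has_vector_derivative_transform_within_open[OF _ B_open that]) (simp add: chart)
    with Zh_derivatives(1)[OF that] show ?thesis
      by (rule vector_derivative_unique_at)
  qed
  then show "h' t *\<^sub>R Z' (h t) = \<Lambda> t *\<^sub>R y' t + \<Lambda>' t *\<^sub>R y t"
    using assms .
  have "((\<lambda>s. \<Lambda> s *\<^sub>R y' s + \<Lambda>' s *\<^sub>R y s) has_vector_derivative
          (\<Lambda> t *\<^sub>R y'' t + \<Lambda>' t *\<^sub>R y' t) + (\<Lambda>' t *\<^sub>R y' t + \<Lambda>'' t *\<^sub>R y t)) (at t)"
    using scale_C2[OF assms] y_derivatives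
    by (intro has_vector_derivative_add has_vector_derivative_scaleR) auto
  then have rhs: "((\<lambda>s. h' s *\<^sub>R Z' (h s)) has_vector_derivative
          (\<Lambda> t *\<^sub>R y'' t + \<Lambda>' t *\<^sub>R y' t) + (\<Lambda>' t *\<^sub>R y' t + \<Lambda>'' t *\<^sub>R y t)) (at t)"
    by (rule has_vector_derivative_transform_within_open[OF _ B_open assms]) (simp add: first)
  have lhs: "((\<lambda>s. h' s *\<^sub>R Z' (h s)) has_vector_derivative
          h' t *\<^sub>R (h' t *\<^sub>R Z'' (h t)) + h'' t *\<^sub>R Z' (h t)) (at t)"
    using h_C2[OF assms] Zh_derivatives(2)[OF assms] by (intro has_vector_derivative_scaleR) auto
  from lhs rhs have "h' t *\<^sub>R (h' t *\<^sub>R Z'' (h t)) + h'' t *\<^sub>R Z' (h t)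
      = (\<Lambda> t *\<^sub>R y'' t + \<Lambda>' t *\<^sub>R y' t) + (\<Lambda>' t *\<^sub>R y' t + \<Lambda>'' t *\<^sub>R y t)"
    by (rule vector_derivative_unique_at)
  also have "\<dots> = \<Lambda> t *\<^sub>R y'' t + (2 * \<Lambda>' t) *\<^sub>R y' t + \<Lambda>'' t *\<^sub>R y t"
    by (simp add: vec_eq_iff algebra_simps)
  finally show "h' t *\<^sub>R (h' t *\<^sub>R Z'' (h t)) + h'' t *\<^sub>R Z' (h t)
           = \<Lambda> t *\<^sub>R y'' t + (2 * \<Lambda>' t) *\<^sub>R y' t + \<Lambda>'' t *\<^sub>R y t" .
qed

lemma deriv_h_eq: "t \<in> B \<Longrightarrow> h' t = \<Lambda> t"
proof -
  assume "t \<in> B"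
  have "h' t ^ 3 = det3 (h' t *\<^sub>R (h' t *\<^sub>R Z'' (h t)) + h'' t *\<^sub>R Z' (h t)) (h' t *\<^sub>R Z' (h t)) (Z (h t))"
    using Z_det[of "h t"] by (simp add: power3_eq_cube)
  also have "\<dots> = det3 (\<Lambda> t *\<^sub>R y'' t + (2 * \<Lambda>' t) *\<^sub>R y' t + \<Lambda>'' t *\<^sub>R y t)
                     (\<Lambda> t *\<^sub>R y' t + \<Lambda>' t *\<^sub>R y t) (\<Lambda> t *\<^sub>R y t)"
    by (simp only: chart_derivatives[OF \<open>t \<in> B\<close>] chart[OF \<open>t \<in> B\<close>])
  also have "\<dots> = \<Lambda> t ^ 3"
    by (simp add: power3_eq_cube y_det)
  finally show "h' t = \<Lambda> t"
    by (metis odd_real_root_power_cancel odd_numeral)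
qed

lemma deriv2_h_eq: "t \<in> B \<Longrightarrow> h'' t = \<Lambda>' t"
proof -
  assume "t \<in> B"
  have "DERIV \<Lambda> t :> h'' t"
    by (rule has_field_derivative_transform_within_open[OF h_C2[OF \<open>t \<in> B\<close>, THEN conjunct2]
          B_open \<open>t \<in> B\<close>]) (simp add: deriv_h_eq)
  with scale_C2[OF \<open>t \<in> B\<close>] show ?thesis
    by (blast intro: DERIV_unique)
qed

lemma Z'_chart:
  assumes "t \<in> B"
  shows "Z' (h t) = y' t + (\<Lambda>' t / \<Lambda> t) *\<^sub>R y t"
proof -
  have "\<Lambda> t *\<^sub>R Z' (h t) = \<Lambda> t *\<^sub>R (y' t + (\<Lambda>' t / \<Lambda> t) *\<^sub>R y t)"
    using chart_derivatives(1)[OF assms] deriv_h_eq[OF assms] fl_scale(2)[of t]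
    by (simp add: scaleR_add_right)
  with fl_scale(2)[of t] show ?thesis
    by simp
qed

lemma Z''_chart:
  assumes "t \<in> B"
  shows "Z'' (h t) = (1 / \<Lambda> t) *\<^sub>R y'' t + (\<Lambda>' t / \<Lambda> t ^ 2) *\<^sub>R y' t
                     + ((\<Lambda>'' t * \<Lambda> t - \<Lambda>' t ^ 2) / \<Lambda> t ^ 3) *\<^sub>R y t"
proof -
  have "(\<Lambda> t * \<Lambda> t) *\<^sub>R Z'' (h t)
          = \<Lambda> t *\<^sub>R y'' t + (2 * \<Lambda>' t) *\<^sub>R y' t + \<Lambda>'' t *\<^sub>R y t - \<Lambda>' t *\<^sub>R Z' (h t)"
    using chart_derivatives(2)[OF assms] by (simp add: deriv_h_eq deriv2_h_eq assms eq_diff_eq)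
  with fl_scale(2)[of t] show ?thesis
    unfolding Z'_chart[OF assms]
    by (simp add: vec_eq_iff field_simps power2_eq_square power3_eq_cube)
qed

text \<open>The term coming from Z''' drops out because Z''' is a multiple of Z, so \<alpha> enters only
  through y'''.\<close>

lemma det_Z''_has_derivative:
  assumes "t \<in> B"
  shows "DERIV (\<lambda>s. det3 (Z'' (h s)) (y'' s) (y s)) t
           :> - 2 * \<alpha> t / \<Lambda> t + (\<Lambda>'' t * \<Lambda> t - \<Lambda>' t ^ 2) / \<Lambda> t ^ 3"
proof -
  have "det3 (h' t *\<^sub>R Z''' (h t)) (y'' t) (y t) + det3 (Z'' (h t)) (y''' t) (y t)
          + det3 (Z'' (h t)) (y'' t) (y' t)
        = - 2 * \<alpha> t / \<Lambda> t + (\<Lambda>'' t * \<Lambda> t - \<Lambda>' t ^ 2) / \<Lambda> t ^ 3"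
    using det_y_permuted y_det[of t]
    by (simp add: Z'''_eq chart[OF assms] y'''_eq Z''_chart[OF assms] det3_swap(1)[of "y' t"])
  with det3_has_real_derivative[OF Zh_derivatives(3)[OF assms] y_derivatives(3,1)] show ?thesis
    by simp
qed

lemma alpha_eq:
  assumes "t \<in> B"
  shows "\<alpha> t = \<Lambda>'' t / \<Lambda> t - 3/2 * (\<Lambda>' t / \<Lambda> t)^2"
proof -
  have \<Lambda>_nz: "\<Lambda> s \<noteq> 0" for s
    by (rule fl_scale(2))
  have "DERIV (\<lambda>s. det3 (Z'' (h s)) (y'' s) (y s)) t :> (2 * \<Lambda>' t ^ 2 - \<Lambda>'' t * \<Lambda> t) / \<Lambda> t ^ 3"
  proof (rule has_field_derivative_transform_within_open[OF _ B_open assms])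
    show "DERIV (\<lambda>s. - \<Lambda>' s / \<Lambda> s ^ 2) t :> (2 * \<Lambda>' t ^ 2 - \<Lambda>'' t * \<Lambda> t) / \<Lambda> t ^ 3"
      using scale_C2[OF assms] \<Lambda>_nz[of t]
      by (auto intro!: derivative_eq_intros simp: field_simps power2_eq_square power3_eq_cube)
    show "- \<Lambda>' s / \<Lambda> s ^ 2 = det3 (Z'' (h s)) (y'' s) (y s)" if "s \<in> B" for s
      using det_y_permuted by (simp add: Z''_chart[OF that])
  qed
  with det_Z''_has_derivative[OF assms]
  have "- 2 * \<alpha> t / \<Lambda> t + (\<Lambda>'' t * \<Lambda> t - \<Lambda>' t ^ 2) / \<Lambda> t ^ 3
      = (2 * \<Lambda>' t ^ 2 - \<Lambda>'' t * \<Lambda> t) / \<Lambda> t ^ 3"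
    by (rule DERIV_unique)
  moreover have "(- 2 * \<alpha> t / \<Lambda> t + (\<Lambda>'' t * \<Lambda> t - \<Lambda>' t ^ 2) / \<Lambda> t ^ 3) * \<Lambda> t ^ 3
      = - 2 * \<alpha> t * \<Lambda> t ^ 2 + (\<Lambda>'' t * \<Lambda> t - \<Lambda>' t ^ 2)"
    using \<Lambda>_nz[of t] by (simp add: field_simps power3_eq_cube power2_eq_square)
  ultimately have "- 2 * \<alpha> t * \<Lambda> t ^ 2 + (\<Lambda>'' t * \<Lambda> t - \<Lambda>' t ^ 2) = 2 * \<Lambda>' t ^ 2 - \<Lambda>'' t * \<Lambda> t"
    using \<Lambda>_nz[of t] by simp
  with \<Lambda>_nz[of t] show ?thesis
    by (simp add: field_simps power2_eq_square)
qed

end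

context FL_comparison
begin

lemma fl_scale_schwarzian:
  "twice_differentiable_at fl_scale t
     \<and> \<alpha> t = deriv (deriv fl_scale) t / fl_scale t - 3/2 * (deriv fl_scale t / fl_scale t)^2"
proof -
  obtain B h where "open B" "t \<in> B" "\<And>t. t \<in> B \<Longrightarrow> Z (h t) = fl_scale t *\<^sub>R y t"
    "\<And>t. t \<in> B \<Longrightarrow> twice_differentiable_at h t" "\<And>t. t \<in> B \<Longrightarrow> twice_differentiable_at fl_scale t"
    using local_reparametrization[of t] by blast
  then interpret FL_chart y Z \<alpha> \<beta> b L B h
    by unfold_locales
  from \<open>t \<in> B\<close> show ?thesis
    using alpha_eq scale_C2 by blast
qed

lemma eigenvalue_one: "\<exists>T. is_monodromy \<alpha> T \<and> has_eigenvalue_one T"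
proof -
  define e where "e = sgn (fl_scale 0)"
  define \<mu> where "\<mu> t = e * fl_scale t" for t
  have "continuous_on UNIV fl_scale"
    using fl_scale_schwarzian by (meson DERIV_isCont continuous_at_imp_continuous_on)
  then have "fl_scale t * fl_scale 0 > 0" for t
    using fl_scale(2) by (rule nonvanishing_continuous_same_sign)
  then have \<mu>_pos: "\<mu> t > 0" for t
    by (auto simp: \<mu>_def e_def sgn_real_def zero_less_mult_iff)
  have e: "e * e = 1" "e \<noteq> 0"
    using fl_scale(2)[of 0] by (simp_all add: e_def sgn_real_def)
  have \<mu>': "DERIV \<mu> t :> e * deriv fl_scale t" "DERIV (\<lambda>t. e * deriv fl_scale t) t :> e * deriv (deriv fl_scale) t"
    for t
    unfolding \<mu>_def using fl_scale_schwarzian[of t] by (auto intro: DERIV_cmult)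
  have "\<alpha> t = e * deriv (deriv fl_scale) t / \<mu> t - 3/2 * (e * deriv fl_scale t / \<mu> t)^2" for t
    using fl_scale_schwarzian[of t] e fl_scale(2)[of t]
    by (simp add: \<mu>_def power2_eq_square field_simps)
  then have "hill_solution \<alpha> (\<lambda>t. \<mu> t powr (-1/2))"
    by (rule hill_solution_powr_neg_half[OF \<mu>_pos \<mu>'])
  moreover have "\<mu> (t + 2*pi) = \<mu> t" for t
    by (simp add: \<mu>_def fl_scale_periodic)
  ultimately show ?thesis
    by (intro periodic_hill_solution_imp_eigenvalue_one[where p = "\<lambda>t. \<mu> t powr (-1/2)"])
       (simp_all add: \<mu>_pos less_imp_neq[OF \<mu>_pos, symmetric])
qed

end

theorem corollary2:
  fixes K :: "(real^3) set" and k :: nat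
    and \<alpha> \<beta> :: "real \<Rightarrow> real" and y :: "real \<Rightarrow> real^3"
  assumes "k \<ge> 5"
    and "regular_convex_cone K"
    and "Ck_pos_curved_boundary k K"
    and "\<forall>t. \<alpha> (t + 2*pi) = \<alpha> t" and "\<forall>t. \<beta> (t + 2*pi) = \<beta> t"
    and "Ck (k - 4) \<alpha>" and "Ck (k - 5) \<beta>"
    and "Ck_vec 3 y" and "\<forall>t. y (t + 2*pi) = y t"
    and "\<forall>t. vderiv (vderiv (vderiv y)) t + (2 * \<alpha> t) *\<^sub>R vderiv y t
              + (deriv \<alpha> t) *\<^sub>R y t + (\<beta> t) *\<^sub>R y t = 0"
    and "\<forall>t. det3 (vderiv (vderiv y) t) (vderiv y t) (y t) = 1"
    and "\<forall>t. y t \<in> frontier K - {0}"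
    and "\<forall>x \<in> frontier K - {0}. \<exists>!t. t \<in> {0..<2*pi} \<and> (\<exists>l>0. x = l *\<^sub>R y t)"
    and "\<forall>T. is_monodromy \<alpha> T \<longrightarrow> \<not> has_eigenvalue_one T"
  shows "\<not> has_global_periodic_FL K"
proof
  assume "has_global_periodic_FL K"
  then obtain L Z b where "L > 0" "Ck_vec 3 Z" "\<forall>s. Z (s + L) = Z s"
    and FL_ray: "\<forall>x \<in> frontier K - {0}. \<exists>!s. s \<in> {0..<L} \<and> (\<exists>l. l \<noteq> 0 \<and> x = l *\<^sub>R Z s)"
    and "\<forall>s. det3 (vderiv (vderiv Z) s) (vderiv Z s) (Z s) = 1"
    and "\<forall>s. vderiv (vderiv (vderiv Z)) s + b s *\<^sub>R Z s = 0"
    unfolding has_global_periodic_FL_def by blast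
  moreover have "\<exists>!s. s \<in> {0..<L} \<and> (\<exists>l. l \<noteq> 0 \<and> y t = l *\<^sub>R Z s)" for t
    using FL_ray assms(12) by blast
  ultimately interpret FL_comparison y Z \<alpha> \<beta> b L
    using assms(8-11) by unfold_locales auto
  from eigenvalue_one assms(14) show False
    by blast
qed

end
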